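(* Let $\lambda>0$, $\mu\in(0,\tfrac15]$ (the paper writes $\mu=\iota^3$) and $A>0$. Set $$\gamma_1:=\frac12\min\Big\{\frac{8\lambda}{5(3+800\lambda)},\ \frac1{1500},\ \frac{1}{27(13\lambda+12)(10\lambda+\mu+9)^2}\Big\},\qquad \gamma_2:=\max\{8\lambda+1+\gamma_1,\ 4\lambda+6+\gamma_1\}.$$ Let $Z_0,\dots,Z_7\in\mathbb{R}$ with $\sum_{\ell=0}^7|Z_\ell|<\gamma_1$, and let $\mathfrak B=\frac1A M$ where $$M=\begin{pmatrix}4\lambda+Z_1 & Z_2 & \frac{2(3-8\mu)}{15}-4\lambda+Z_3 & Z_4 & 0\\ 0 & \frac{25}{36}+Z_0 & 0&0&0\\ -\frac{2(3-8\mu)}{15}-4\lambda & 0 & 4\lambda+\frac{2(3-8\mu)}{15} & 0 & 0\\ 0 & \frac{2(1-\mu)}{3} & -\frac{2(1-\mu)}{5}+Z_5 & 4\lambda+4+Z_6 & 2\mu\\ 0&0& -\frac{(3\mu+2)^2}{6(10\lambda+\mu+9)} & \frac43+Z_7 & \frac{(3\mu+2)^2}{2(10\lambda+\mu+9)}\end{pmatrix}.$$ Then for every nonzero $\eta\in\mathbb{R}^5$, $$\frac{\gamma_1}{A}\,\eta^T\eta<\eta^T\mathfrak B\eta<\frac{\gamma_2}{A}\,\eta^T\eta .$$ *)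

theory Defs
  imports "HOL-Analysis.Analysis"
begin

definition gamma1 :: "real \<Rightarrow> real \<Rightarrow> real" where
  "gamma1 lam mu = (1/2) * Min {8*lam / (5*(3 + 800*lam)), 1/1500,
      1 / (27*(13*lam + 12)*(10*lam + mu + 9)^2)}"

definition gamma2 :: "real \<Rightarrow> real \<Rightarrow> real" where
  "gamma2 lam mu = max (8*lam + 1 + gamma1 lam mu) (4*lam + 6 + gamma1 lam mu)"

definition Mmat :: "real \<Rightarrow> real \<Rightarrow> (nat \<Rightarrow> real) \<Rightarrow> nat \<Rightarrow> nat \<Rightarrow> real" where
  "Mmat lam mu Z i j =
    (let c = 2*(3 - 8*mu)/15; d = 10*lam + mu + 9 in
     if i = 0 then [4*lam + Z 1, Z 2, c - 4*lam + Z 3, Z 4, 0] ! j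
     else if i = 1 then [0, 25/36 + Z 0, 0, 0, 0] ! j
     else if i = 2 then [- c - 4*lam, 0, 4*lam + c, 0, 0] ! j
     else if i = 3 then [0, 2*(1-mu)/3, - 2*(1-mu)/5 + Z 5, 4*lam + 4 + Z 6, 2*mu] ! j
     else if i = 4 then [0, 0, - (((3*mu+2)^2) / (6*d)), 4/3 + Z 7, ((3*mu+2)^2) / (2*d)] ! j
     else 0)"

definition quadform :: "(nat \<Rightarrow> nat \<Rightarrow> real) \<Rightarrow> (nat \<Rightarrow> real) \<Rightarrow> real" where
  "quadform B eta = (\<Sum>i<5. \<Sum>j<5. eta i * B i j * eta j)"

end

theory Submission
  imports Defs
begin

text \<open>Write \<open>M = M\<^sub>0 + P\<close>, where \<open>M\<^sub>0\<close> is \<open>M\<close> with \<open>Z = 0\<close>.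
  For any matrix \<open>B\<close>, \<open>|\<eta>\<^sup>T B \<eta>| \<le> R |\<eta>|\<^sup>2\<close> as soon as every row of \<open>B + B\<^sup>T\<close>
  has absolute sum at most \<open>2R\<close> (Gershgorin's bound for the symmetric part).
  With \<open>R = \<Sum>|Z\<^sub>l|\<close> this bounds the perturbation by \<open>\<gamma>\<^sub>1 |\<eta>|\<^sup>2\<close>,
  and with \<open>R = max (8\<lambda> + 1) (4\<lambda> + 6)\<close> it bounds \<open>\<eta>\<^sup>T M\<^sub>0 \<eta>\<close> from above.
  From below, \<open>\<eta>\<^sup>T M\<^sub>0 \<eta> - 2\<gamma>\<^sub>1 |\<eta>|\<^sup>2\<close> is a sum of five binary quadratic forms in the
  pairs \<open>(\<eta>\<^sub>0, \<eta>\<^sub>2), (\<eta>\<^sub>1, \<eta>\<^sub>3), (\<eta>\<^sub>2, \<eta>\<^sub>3), (\<eta>\<^sub>2, \<eta>\<^sub>4), (\<eta>\<^sub>3, \<eta>\<^sub>4)\<close>,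
  each nonnegative by its discriminant; the first and last terms of the minimum defining
  \<open>\<gamma>\<^sub>1\<close> are what the \<open>(\<eta>\<^sub>0, \<eta>\<^sub>2)\<close> and \<open>(\<eta>\<^sub>3, \<eta>\<^sub>4)\<close> blocks need.\<close>

lemma abs_mult_le_half_sum_squares:
  fixes a b :: real
  shows "\<bar>a * b\<bar> \<le> (a\<^sup>2 + b\<^sup>2) / 2"
  using sum_squares_bound[of "\<bar>a\<bar>" "\<bar>b\<bar>"] by (simp add: abs_mult)

lemma abs_quadratic_sum_le_row_sums:
  fixes B :: "'a \<Rightarrow> 'a \<Rightarrow> real"
  assumes "finite I" and rows: "\<And>i. i \<in> I \<Longrightarrow> (\<Sum>j\<in>I. \<bar>B i j + B j i\<bar>) \<le> 2 * R"
  shows "\<bar>\<Sum>i\<in>I. \<Sum>j\<in>I. x i * B i j * x j\<bar> \<le> R * (\<Sum>i\<in>I. (x i)\<^sup>2)"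
proof -
  define s where "s i j = \<bar>B i j + B j i\<bar> / 2" for i j
  have symm: "(\<Sum>i\<in>I. \<Sum>j\<in>I. x i * B i j * x j) = (\<Sum>i\<in>I. \<Sum>j\<in>I. x i * x j * ((B i j + B j i) / 2))"
  proof -
    have "(\<Sum>i\<in>I. \<Sum>j\<in>I. x i * B j i * x j) = (\<Sum>i\<in>I. \<Sum>j\<in>I. x i * B i j * x j)"
      by (subst sum.swap) (simp add: ac_simps)
    moreover have "(\<Sum>i\<in>I. \<Sum>j\<in>I. x i * x j * ((B i j + B j i) / 2))
        = ((\<Sum>i\<in>I. \<Sum>j\<in>I. x i * B i j * x j) + (\<Sum>i\<in>I. \<Sum>j\<in>I. x i * B j i * x j)) / 2"
      by (simp add: ring_distribs add_divide_distrib sum.distrib mult_ac flip: sum_divide_distrib)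
    ultimately show ?thesis by simp
  qed
  have "\<bar>\<Sum>i\<in>I. \<Sum>j\<in>I. x i * B i j * x j\<bar> \<le> (\<Sum>i\<in>I. \<Sum>j\<in>I. s i j * ((x i)\<^sup>2 + (x j)\<^sup>2) / 2)"
  proof -
    have "\<bar>x i * x j * ((B i j + B j i) / 2)\<bar> \<le> s i j * ((x i)\<^sup>2 + (x j)\<^sup>2) / 2" for i j
    proof -
      have "\<bar>x i * x j * ((B i j + B j i) / 2)\<bar> = s i j * \<bar>x i * x j\<bar>"
        by (simp add: s_def abs_mult)
      also have "\<dots> \<le> s i j * ((x i)\<^sup>2 + (x j)\<^sup>2) / 2"
        using mult_left_mono[OF abs_mult_le_half_sum_squares, of "s i j"] by (simp add: s_def)
      finally show ?thesis .
    qed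
    then show ?thesis unfolding symm
      by (intro order_trans[OF sum_abs] sum_mono order_trans[OF sum_abs]) auto
  qed
  also have "\<dots> = (\<Sum>i\<in>I. (x i)\<^sup>2 * (\<Sum>j\<in>I. s i j))"
  proof -
    have "(\<Sum>i\<in>I. \<Sum>j\<in>I. s i j * (x j)\<^sup>2) = (\<Sum>i\<in>I. \<Sum>j\<in>I. s i j * (x i)\<^sup>2)"
      by (subst sum.swap) (simp add: s_def add.commute)
    moreover have "(\<Sum>i\<in>I. \<Sum>j\<in>I. s i j * ((x i)\<^sup>2 + (x j)\<^sup>2) / 2)
        = ((\<Sum>i\<in>I. \<Sum>j\<in>I. s i j * (x i)\<^sup>2) + (\<Sum>i\<in>I. \<Sum>j\<in>I. s i j * (x j)\<^sup>2)) / 2"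
      by (simp add: ring_distribs add_divide_distrib sum.distrib flip: sum_divide_distrib)
    ultimately show ?thesis
      by (simp add: sum_distrib_right mult.commute)
  qed
  also have "\<dots> \<le> (\<Sum>i\<in>I. (x i)\<^sup>2 * R)"
    using rows by (intro sum_mono mult_left_mono) (auto simp: s_def mult.commute simp flip: sum_divide_distrib)
  also have "\<dots> = R * (\<Sum>i\<in>I. (x i)\<^sup>2)"
    by (simp add: sum_distrib_left mult.commute)
  finally show ?thesis .
qed

lemma abs_quadratic_sum_le_sum_abs:
  fixes B :: "'a \<Rightarrow> 'a \<Rightarrow> real"
  assumes "finite I"
  shows "\<bar>\<Sum>i\<in>I. \<Sum>j\<in>I. x i * B i j * x j\<bar> \<le> (\<Sum>i\<in>I. \<Sum>j\<in>I. \<bar>B i j\<bar>) * (\<Sum>i\<in>I. (x i)\<^sup>2)"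
proof (rule abs_quadratic_sum_le_row_sums[OF assms])
  fix i assume "i \<in> I"
  have "(\<Sum>j\<in>I. \<bar>B i j\<bar>) \<le> (\<Sum>i\<in>I. \<Sum>j\<in>I. \<bar>B i j\<bar>)"
    using \<open>i \<in> I\<close> assms by (intro member_le_sum) (auto intro: sum_nonneg)
  moreover have "(\<Sum>j\<in>I. \<bar>B j i\<bar>) \<le> (\<Sum>j\<in>I. \<Sum>i\<in>I. \<bar>B j i\<bar>)"
    using \<open>i \<in> I\<close> assms by (intro sum_mono member_le_sum) auto
  moreover have "(\<Sum>j\<in>I. \<bar>B i j + B j i\<bar>) \<le> (\<Sum>j\<in>I. \<bar>B i j\<bar>) + (\<Sum>j\<in>I. \<bar>B j i\<bar>)"
    by (simp add: sum.distrib[symmetric] sum_mono abs_triangle_ineq)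
  ultimately show "(\<Sum>j\<in>I. \<bar>B i j + B j i\<bar>) \<le> 2 * (\<Sum>i\<in>I. \<Sum>j\<in>I. \<bar>B i j\<bar>)"
    by linarith
qed

lemma binary_form_nonneg:
  fixes p q r x y :: real
  assumes "0 \<le> p" and "0 \<le> q" and "r\<^sup>2 \<le> 4 * p * q"
  shows "0 \<le> p * x\<^sup>2 + r * x * y + q * y\<^sup>2"
proof (cases "p = 0")
  case True
  with assms have "r = 0" by simp
  with True assms show ?thesis by simp
next
  case False
  with assms have "p > 0" by simp
  have "4 * p * (p * x\<^sup>2 + r * x * y + q * y\<^sup>2) = (2 * p * x + r * y)\<^sup>2 + (4 * p * q - r\<^sup>2) * y\<^sup>2"
    by (simp add: algebra_simps power2_eq_square)
  also have "\<dots> \<ge> 0" using assms by simp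
  finally show ?thesis using \<open>p > 0\<close> by (simp add: zero_le_mult_iff)
qed

lemma quadform_diff: "quadform (\<lambda>i j. B i j - C i j) x = quadform B x - quadform C x"
  by (simp add: quadform_def left_diff_distrib right_diff_distrib sum_subtractf)

lemma quadform_divide: "quadform (\<lambda>i j. B i j / A) x = quadform B x / A"
  by (simp add: quadform_def sum_divide_distrib)

lemma sum_squares_five:
  fixes x :: "nat \<Rightarrow> real"
  shows "(\<Sum>i<5. (x i)\<^sup>2) = (x 0)\<^sup>2 + (x 1)\<^sup>2 + (x 2)\<^sup>2 + (x 3)\<^sup>2 + (x 4)\<^sup>2"
  by (simp add: eval_nat_numeral lessThan_Suc)

lemma quadform_Mmat_unperturbed:
  fixes lam mu :: real
  defines "k \<equiv> (3*mu + 2)\<^sup>2 / (2*(10*lam + mu + 9))"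
  shows "quadform (Mmat lam mu (\<lambda>_. 0)) x =
    4*lam * (x 0)\<^sup>2 - 8*lam * x 0 * x 2 + 25/36 * (x 1)\<^sup>2 + 2*(1 - mu)/3 * x 1 * x 3
    + (4*lam + 2*(3 - 8*mu)/15) * (x 2)\<^sup>2 - 2*(1 - mu)/5 * x 2 * x 3 - k/3 * x 2 * x 4
    + (4*lam + 4) * (x 3)\<^sup>2 + (2*mu + 4/3) * x 3 * x 4 + k * (x 4)\<^sup>2"
  by (simp add: quadform_def Mmat_def Let_def k_def eval_nat_numeral lessThan_Suc
      power2_eq_square field_simps)

lemma sum_abs_Mmat_perturbation:
  "(\<Sum>i<5. \<Sum>j<5. \<bar>Mmat lam mu Z i j - Mmat lam mu (\<lambda>_. 0) i j\<bar>) = (\<Sum>l\<le>7. \<bar>Z l\<bar>)"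
  by (simp add: eval_nat_numeral lessThan_Suc atMost_Suc) (simp add: Mmat_def Let_def eval_nat_numeral)

lemma corner_coefficient_bounds:
  fixes lam mu :: real
  assumes "lam > 0" and "0 < mu" and "mu \<le> 1/5"
  shows "2 / (10*lam + 46/5) \<le> (3*mu + 2)\<^sup>2 / (2*(10*lam + mu + 9))"
    and "(3*mu + 2)\<^sup>2 / (2*(10*lam + mu + 9)) \<le> 2/5"
proof -
  have e: "2\<^sup>2 \<le> (3*mu + 2)\<^sup>2" "(3*mu + 2)\<^sup>2 \<le> (13/5)\<^sup>2"
    using assms by (intro power_mono; simp)+
  have "2 / (10*lam + 46/5) = 2\<^sup>2 / (2*(10*lam + 46/5))"
    using assms by (simp add: power2_eq_square field_simps)
  also have "\<dots> \<le> (3*mu + 2)\<^sup>2 / (2*(10*lam + mu + 9))"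
    using e assms by (intro frac_le) auto
  finally show "2 / (10*lam + 46/5) \<le> (3*mu + 2)\<^sup>2 / (2*(10*lam + mu + 9))" .
  have "(3*mu + 2)\<^sup>2 / (2*(10*lam + mu + 9)) \<le> (13/5)\<^sup>2 / (2*9)"
    using e assms by (intro frac_le) auto
  then show "(3*mu + 2)\<^sup>2 / (2*(10*lam + mu + 9)) \<le> 2/5"
    by (simp add: power2_eq_square)
qed

lemma corner_block_nonneg:
  fixes lam mu m y z :: real
  assumes lam: "lam > 0" and mu: "0 < mu" "mu \<le> 1/5"
    and m: "0 < m" "m \<le> 1/1500" "m * (13*lam + 12) \<le> 1/2187"
  defines "k \<equiv> (3*mu + 2)\<^sup>2 / (2*(10*lam + mu + 9))"
  shows "0 \<le> (4*lam + 33/10 - m) * y\<^sup>2 + (2*mu + 4/3) * y * z + (3/4 * k - m) * z\<^sup>2"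
proof (rule binary_form_nonneg)
  define d where "d = 10*lam + mu + 9"
  define \<delta> where "\<delta> = 4*lam + 33/10 - m"
  have k: "2 / (10*lam + 46/5) \<le> k" "0 \<le> k"
    using corner_coefficient_bounds(1)[OF lam mu] lam unfolding k_def
    by (auto intro: order_trans[rotated])
  have kD: "2 \<le> k * (10*lam + 46/5)" using k lam by (simp add: divide_le_eq)
  have "m * (10*lam + 46/5) \<le> m * (13*lam + 12)" and "m * \<delta> \<le> m * (13*lam + 12)"
    using m lam by (intro mult_left_mono; simp add: \<delta>_def)+
  then have m_small: "m * (10*lam + 46/5) \<le> 1/2187" "m * \<delta> \<le> 1/2187"
    using m by linarith+
  show "0 \<le> 4*lam + 33/10 - m" using lam m by simp
  have "m * (10*lam + 46/5) \<le> (3/4 * k) * (10*lam + 46/5)" using kD m_small by linarith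
  then show "0 \<le> 3/4 * k - m" using lam by (simp add: mult_le_cancel_right_pos)
  \<comment> \<open>As \<open>(2\<mu> + 4/3)\<^sup>2 = 8dk/9\<close>, the discriminant condition amounts to \<open>4m\<delta> \<le> k(27\<delta> - 8d)/9\<close>.\<close>
  have "2 \<le> k * (28*lam + 15)"
    using kD mult_left_mono[of "10*lam + 46/5" "28*lam + 15" k] k lam by linarith
  also have "\<dots> \<le> k * (27 * \<delta> - 8 * d)"
    using k m mu by (intro mult_left_mono) (auto simp: d_def \<delta>_def)
  finally have gap: "2 \<le> k * (27 * \<delta> - 8 * d)" .
  have "(2*mu + 4/3)\<^sup>2 = 8/9 * d * k"
    using lam mu by (simp add: k_def d_def power2_eq_square field_simps)
  also have "\<dots> \<le> 8/9 * d * k + (k * (27 * \<delta> - 8 * d) / 9 - 4 * (m * \<delta>))"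
    using gap m_small(2) by linarith
  also have "\<dots> = 4 * \<delta> * (3/4 * k - m)"
    by (simp add: field_simps)
  finally show "(2*mu + 4/3)\<^sup>2 \<le> 4 * (4*lam + 33/10 - m) * (3/4 * k - m)"
    by (simp add: \<delta>_def)
qed

lemma quadform_Mmat_unperturbed_lower:
  fixes lam mu m :: real and x :: "nat \<Rightarrow> real"
  assumes lam: "lam > 0" and mu: "0 < mu" "mu \<le> 1/5"
    and m: "0 < m" "m * (2000*lam + 1) \<le> 4*lam" "m \<le> 1/1500" "m * (13*lam + 12) \<le> 1/2187"
  shows "m * (\<Sum>i<5. (x i)\<^sup>2) \<le> quadform (Mmat lam mu (\<lambda>_. 0)) x"
proof -
  define k where "k = (3*mu + 2)\<^sup>2 / (2*(10*lam + mu + 9))"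
  define c where "c = 2*(3 - 8*mu)/15"
  define \<beta> where "\<beta> = c - 1/500 - m - 9/100"
  have k: "0 \<le> k" "k \<le> 2/5"
    using corner_coefficient_bounds[OF lam mu] lam unfolding k_def
    by (auto intro: order_trans[rotated])
  have \<beta>: "k/9 \<le> \<beta>" using k m mu unfolding \<beta>_def c_def by (simp add: field_simps)
  have A: "0 \<le> (4*lam - m) * (x 0)\<^sup>2 + (-8*lam) * x 0 * x 2 + (4*lam + 1/500) * (x 2)\<^sup>2"
    using m lam mult_pos_pos[OF lam m(1)]
    by (intro binary_form_nonneg) (auto simp: algebra_simps power2_eq_square)
  have "(2*(1 - mu)/3)\<^sup>2 \<le> (2/3)\<^sup>2" using mu by (intro power_mono) auto
  also have "\<dots> \<le> 4 * (25/36 - m) * (1/5)" using m by (simp add: power2_eq_square)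
  finally have B: "0 \<le> (25/36 - m) * (x 1)\<^sup>2 + (2*(1 - mu)/3) * x 1 * x 3 + 1/5 * (x 3)\<^sup>2"
    using m by (intro binary_form_nonneg) auto
  have "(- (2*(1 - mu)/5))\<^sup>2 \<le> (2/5)\<^sup>2" using mu by (simp only: power2_minus, intro power_mono) auto
  also have "\<dots> \<le> 4 * (9/100) * (1/2)" by (simp add: power2_eq_square)
  finally have C: "0 \<le> 9/100 * (x 2)\<^sup>2 + (- (2*(1 - mu)/5)) * x 2 * x 3 + 1/2 * (x 3)\<^sup>2"
    by (intro binary_form_nonneg) auto
  have D: "0 \<le> \<beta> * (x 2)\<^sup>2 + (- k/3) * x 2 * x 4 + k/4 * (x 4)\<^sup>2"
    using k \<beta> mult_left_mono[OF \<beta>, of k]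
    by (intro binary_form_nonneg) (auto simp: power2_eq_square mult_ac)
  have E: "0 \<le> (4*lam + 33/10 - m) * (x 3)\<^sup>2 + (2*mu + 4/3) * x 3 * x 4 + (3/4 * k - m) * (x 4)\<^sup>2"
    using corner_block_nonneg[OF lam mu m(1,3,4)] by (simp add: k_def)
  have "quadform (Mmat lam mu (\<lambda>_. 0)) x - m * (\<Sum>i<5. (x i)\<^sup>2) =
      ((4*lam - m) * (x 0)\<^sup>2 + (-8*lam) * x 0 * x 2 + (4*lam + 1/500) * (x 2)\<^sup>2)
    + ((25/36 - m) * (x 1)\<^sup>2 + (2*(1 - mu)/3) * x 1 * x 3 + 1/5 * (x 3)\<^sup>2)
    + (9/100 * (x 2)\<^sup>2 + (- (2*(1 - mu)/5)) * x 2 * x 3 + 1/2 * (x 3)\<^sup>2)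
    + (\<beta> * (x 2)\<^sup>2 + (- k/3) * x 2 * x 4 + k/4 * (x 4)\<^sup>2)
    + ((4*lam + 33/10 - m) * (x 3)\<^sup>2 + (2*mu + 4/3) * x 3 * x 4 + (3/4 * k - m) * (x 4)\<^sup>2)"
    unfolding quadform_Mmat_unperturbed sum_squares_five k_def[symmetric]
    by (simp add: \<beta>_def c_def algebra_simps)
  then show ?thesis using A B C D E by linarith
qed

lemma quadform_Mmat_unperturbed_upper:
  fixes lam mu G :: real
  assumes lam: "lam > 0" and mu: "0 < mu" "mu \<le> 1/5" and G: "8*lam + 1 \<le> G" "4*lam + 6 \<le> G"
  shows "\<bar>quadform (Mmat lam mu (\<lambda>_. 0)) x\<bar> \<le> G * (\<Sum>i<5. (x i)\<^sup>2)"
  unfolding quadform_def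
proof (rule abs_quadratic_sum_le_row_sums, simp)
  fix i :: nat assume "i \<in> {..<5}"
  define c where "c = 2*(3 - 8*mu)/15"
  define k where "k = (3*mu + 2)\<^sup>2 / (2*(10*lam + mu + 9))"
  define h where "h = (3*mu + 2)\<^sup>2 / (6*(10*lam + mu + 9))"
  have k: "0 \<le> k" "k \<le> 2/5"
    using corner_coefficient_bounds[OF lam mu] lam unfolding k_def
    by (auto intro: order_trans[rotated])
  have h: "h = k/3" by (simp add: h_def k_def field_simps)
  have c: "0 \<le> c" "c \<le> 2/5" using mu by (auto simp: c_def)
  have "i \<in> {0, 1, 2, 3, 4}" using \<open>i \<in> {..<5}\<close> by auto
  then show "(\<Sum>j<5. \<bar>Mmat lam mu (\<lambda>_. 0) i j + Mmat lam mu (\<lambda>_. 0) j i\<bar>) \<le> 2 * G"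
    unfolding Mmat_def Let_def c_def[symmetric] k_def[symmetric] h_def[symmetric]
    using lam mu G k h c
    by (auto simp: eval_nat_numeral lessThan_Suc abs_if) (simp_all add: field_simps)
qed

lemma gamma1_bounds:
  fixes lam mu :: real
  assumes lam: "lam > 0" and mu: "0 < mu"
  defines "m \<equiv> 2 * gamma1 lam mu"
  shows "0 < m" and "m * (2000*lam + 1) \<le> 4*lam" and "m \<le> 1/1500"
    and "m * (13*lam + 12) \<le> 1/2187"
proof -
  define d where "d = 10*lam + mu + 9"
  have d: "9 \<le> d" using lam mu by (simp add: d_def)
  have m_eq: "m = Min {8*lam / (5*(3 + 800*lam)), 1/1500, 1 / (27*(13*lam + 12)*d\<^sup>2)}"
    by (simp add: m_def gamma1_def d_def)
  then show "0 < m" using lam d by simp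
  have "m \<le> 8*lam / (5*(3 + 800*lam))" by (simp add: m_eq)
  then have "m * (4000*lam + 15) \<le> 8*lam" using lam by (simp add: le_divide_eq algebra_simps)
  then show "m * (2000*lam + 1) \<le> 4*lam" using \<open>0 < m\<close> by (simp add: algebra_simps)
  show "m \<le> 1/1500" by (simp add: m_eq)
  have "m \<le> 1 / (27*(13*lam + 12)*d\<^sup>2)" by (simp add: m_eq)
  then have "m * (27*(13*lam + 12)*d\<^sup>2) \<le> 1" using lam d by (simp add: le_divide_eq)
  moreover have "m * (27*(13*lam + 12)*9\<^sup>2) \<le> m * (27*(13*lam + 12)*d\<^sup>2)"
    using \<open>0 < m\<close> lam d by (intro mult_left_mono power_mono) auto
  ultimately show "m * (13*lam + 12) \<le> 1/2187" by (simp add: algebra_simps)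
qed

lemma gamma2_eq: "gamma2 lam mu = max (8*lam + 1) (4*lam + 6) + gamma1 lam mu"
  by (simp add: gamma2_def max_add_distrib_right)

theorem lemmat:
  fixes lam mu A :: real and Z :: "nat \<Rightarrow> real" and eta :: "nat \<Rightarrow> real"
  assumes "lam > 0" and "0 < mu" and "mu \<le> 1/5" and "A > 0"
    and "(\<Sum>l\<le>7. \<bar>Z l\<bar>) < gamma1 lam mu"
    and "\<exists>i<5. eta i \<noteq> 0"
  shows "gamma1 lam mu / A * (\<Sum>i<5. eta i ^ 2)
           < quadform (\<lambda>i j. Mmat lam mu Z i j / A) eta
       \<and> quadform (\<lambda>i j. Mmat lam mu Z i j / A) eta
           < gamma2 lam mu / A * (\<Sum>i<5. eta i ^ 2)"
proof -
  let ?S = "\<Sum>i<5. (eta i)\<^sup>2"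
  let ?Q = "quadform (Mmat lam mu Z) eta"
  let ?U = "quadform (Mmat lam mu (\<lambda>_. 0)) eta"
  let ?P = "quadform (\<lambda>i j. Mmat lam mu Z i j - Mmat lam mu (\<lambda>_. 0) i j) eta"
  obtain i where "i < 5" "eta i \<noteq> 0" using assms(6) by blast
  then have "?S > 0" by (intro sum_pos2[of _ i]) auto
  have "\<bar>?P\<bar> \<le> (\<Sum>i<5. \<Sum>j<5. \<bar>Mmat lam mu Z i j - Mmat lam mu (\<lambda>_. 0) i j\<bar>) * ?S"
    unfolding quadform_def by (rule abs_quadratic_sum_le_sum_abs) simp
  also have "\<dots> = (\<Sum>l\<le>7. \<bar>Z l\<bar>) * ?S" by (simp only: sum_abs_Mmat_perturbation)
  also have "\<dots> < gamma1 lam mu * ?S" using assms(5) \<open>?S > 0\<close> by simp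
  finally have "\<bar>?P\<bar> < gamma1 lam mu * ?S" .
  then have P: "- (gamma1 lam mu * ?S) < ?Q - ?U" "?Q - ?U < gamma1 lam mu * ?S"
    by (auto simp: quadform_diff abs_less_iff)
  have "2 * gamma1 lam mu * ?S \<le> ?U"
    by (rule quadform_Mmat_unperturbed_lower[OF assms(1-3) gamma1_bounds[OF assms(1,2)]])
  with P have "gamma1 lam mu * ?S < ?Q" by linarith
  moreover have "?U \<le> max (8*lam + 1) (4*lam + 6) * ?S"
    using quadform_Mmat_unperturbed_upper[OF assms(1-3), of "max (8*lam + 1) (4*lam + 6)" eta]
    by simp
  with P have "?Q < gamma2 lam mu * ?S" by (simp add: gamma2_eq distrib_right)
  ultimately show ?thesis
    using assms(4) by (simp add: quadform_divide divide_strict_right_mono)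
qed

end
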